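(* Let $\omega>0$, $\mu>0$ and $l=B/\omega\in\mathbb Z$. Then the Stokes multipliers $c_0$ and $c_1$ of the linear system (L) are real.
   Context: Let $\omega>0$, $l\in\mathbb R$, $\mu>0$. System (L) on the Riemann sphere is: $u'=z^{-2}\big(-(lz+\mu(1+z^2))u+\frac{z}{2i\omega}v\big)$, $v'=\frac{1}{2i\omega z}u$, with $w=(u,v)$. It has irregular singular points at $0$ and $\infty$, and at $0$ it is formally equivalent to the diagonal system $\tilde u'=-z^{-2}(lz+\mu(1+z^2))\tilde u$, $\tilde v'=0$, with fundamental matrix $F(z)=\operatorname{diag}(z^{-l}e^{\mu(1/z-z)},1)$. Let $S_+$ (resp. $S_-$) be a sector with vertex $0$ containing the closed upper (resp. lower) half-plane minus $0$, whose closure avoids the opposite imaginary semiaxis $i\mathbb R_-$ (resp. $i\mathbb R_+$), with $S_-$ the complex conjugate of $S_+$. There are unique invertible matrix functions $H_\pm$ holomorphic on $S_\pm$, $C^\infty$ on $\overline{S_\pm}\setminus\{\infty\}$, with $H_\pm(0)=\mathrm{Id}$, such that $w=H_\pm(z)\tilde w$ transforms (L) into the diagonal system. The canonical fundamental matrices are $W_\pm=H_\pm F$, where the branch of $F$ on $S_-$ is the counterclockwise continuation of the branch on $S_+$; $W_{+,1}=H_+F$ with the branch of $F$ on $S_+$ obtained by continuing counterclockwise from $S_-$. Let $\Sigma_0$ (containing $\mathbb R_-$) and $\Sigma_1$ (containing $\mathbb R_+$) be the left and right components of $S_+\cap S_-$. The Stokes matrices are defined by $W_-=W_+C_0$ on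 $\Sigma_0$ and $W_{+,1}=W_-C_1$ on $\Sigma_1$; for $\mu>0$ they have the form $C_0=\begin{pmatrix}1&c_0\\0&1\end{pmatrix}$, $C_1=\begin{pmatrix}1&0\\c_1&1\end{pmatrix}$, and $c_0,c_1$ are the Stokes multipliers. *)

theory Defs
  imports "HOL-Analysis.Analysis"
begin

definition mat2 :: "complex \<Rightarrow> complex \<Rightarrow> complex \<Rightarrow> complex \<Rightarrow> complex^2^2" where
  "mat2 a b c d = (\<chi> i j. if i = 1 then (if j = 1 then a else b) else (if j = 1 then c else d))"

text \<open>Coefficient matrix of system (L):
  u' = z^-2 (-(l z + mu (1+z^2)) u + z/(2 i omega) v),  v' = 1/(2 i omega z) u.\<close>
definition sysL :: "real \<Rightarrow> int \<Rightarrow> real \<Rightarrow> complex \<Rightarrow> complex^2^2" where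
  "sysL \<omega> l \<mu> z = mat2
     ((-(of_int l * z + of_real \<mu> * (1 + z^2))) / z^2)  ((z / (2 * \<i> * of_real \<omega>)) / z^2)
     (1 / (2 * \<i> * of_real \<omega> * z))                        0"

text \<open>Coefficient matrix of the formal diagonal normal form at 0.\<close>
definition diagL :: "int \<Rightarrow> real \<Rightarrow> complex \<Rightarrow> complex^2^2" where
  "diagL l \<mu> z = mat2 ((-(of_int l * z + of_real \<mu> * (1 + z^2))) / z^2) 0 0 0"

text \<open>Fundamental matrix F(z) = diag(z^-l e^{mu(1/z - z)}, 1) of the diagonal system
  (single-valued, since l is an integer).\<close>
definition fundF :: "int \<Rightarrow> real \<Rightarrow> complex \<Rightarrow> complex^2^2" where
  "fundF l \<mu> z = mat2 (z powi (- l) * exp (of_real \<mu> * (1 / z - z))) 0 0 1"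

text \<open>The sector S_+ = {arg z in (-alpha, pi + alpha)}, 0 < alpha < pi/2: it contains the closed
  upper half-plane minus 0 and its closure avoids the negative imaginary semiaxis.\<close>
definition sectorP :: "real \<Rightarrow> complex set" where
  "sectorP \<alpha> = {z. \<exists>r t. 0 < r \<and> - \<alpha> < t \<and> t < pi + \<alpha> \<and> z = of_real r * cis t}"

definition sectorM :: "real \<Rightarrow> complex set" where
  "sectorM \<alpha> = cnj ` sectorP \<alpha>"

definition Sigma0 :: "real \<Rightarrow> complex set" where
  "Sigma0 \<alpha> = connected_component_set (sectorP \<alpha> \<inter> sectorM \<alpha>) (-1)"

definition Sigma1 :: "real \<Rightarrow> complex set" where
  "Sigma1 \<alpha> = connected_component_set (sectorP \<alpha> \<inter> sectorM \<alpha>) 1"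

text \<open>H is a normalizing transformation on the sector S: holomorphic (entrywise) on S,
  continuous on the closure of S with H(0) = Id, invertible on S, and w = H w~ transforms
  (L) into the diagonal system, i.e. H' = A H - H D on S.\<close>
definition normalizing :: "real \<Rightarrow> int \<Rightarrow> real \<Rightarrow> complex set \<Rightarrow> (complex \<Rightarrow> complex^2^2) \<Rightarrow> bool" where
  "normalizing \<omega> l \<mu> S H \<longleftrightarrow>
     (\<forall>i j. (\<lambda>z. H z $ i $ j) holomorphic_on S) \<and>
     continuous_on (closure S) H \<and>
     H 0 = mat 1 \<and>
     (\<forall>z\<in>S. invertible (H z)) \<and>
     (\<forall>z\<in>S. \<forall>i j. ((\<lambda>x. H x $ i $ j) has_field_derivative
          (sysL \<omega> l \<mu> z ** H z - H z ** diagL l \<mu> z) $ i $ j) (at z))"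

end

(*
  Since omega, l and mu are real, z |-> conj z combined with conjugation by J = diag(1, -1) is a
  symmetry of (L): if H is a normalizing transformation on a sector S, then J conj(H(conj z)) J is
  one on conj S.  Normalizing transformations on a sector containing the closed lower half-plane
  are unique: the entries of adj(H) G are cross Wronskians of columns, which become constant after
  weighting by a power of the entry z^(-l) exp(mu (1/z - z)) of F, and which tend to the entries of
  the identity along the real half-axis where that weight stays bounded.  Hence
  H_-(z) = J conj(H_+(conj z)) J.  On the real axis F is real, so with W = H_+ F the Stokes
  relations read J conj(W) J = W C_0 on the negative and W = J conj(W) J C_1 on the positive
  half-axis.  Letting z -> 0, where F_11 tends to 0 resp. infinity, shows that C_0 and C_1 are
  unipotent triangular, and the relation at a single point then shows that the remaining entry
  is real.
*)

theory Submission
  imports Defs "HOL-Real_Asymp.Real_Asymp"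
begin

lemma mat2_nth [simp]:
  "mat2 a b c d $ 1 $ 1 = a" "mat2 a b c d $ 1 $ 2 = b"
  "mat2 a b c d $ 2 $ 1 = c" "mat2 a b c d $ 2 $ 2 = d"
  by (simp_all add: mat2_def)

lemma matrix_mult_nth_2:
  "((A :: complex^2^2) ** B) $ i $ j = A $ i $ 1 * B $ 1 $ j + A $ i $ 2 * B $ 2 $ j"
  by (simp add: matrix_matrix_mult_def sum_2)

lemma mat1_nth_2 [simp]:
  "(mat 1 :: complex^2^2) $ 1 $ 1 = 1" "(mat 1 :: complex^2^2) $ 1 $ 2 = 0"
  "(mat 1 :: complex^2^2) $ 2 $ 1 = 0" "(mat 1 :: complex^2^2) $ 2 $ 2 = 1"
  by (simp_all add: mat_def)

lemma matrix_eq_2: "(A :: complex^2^2) = B \<longleftrightarrow>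
    A $ 1 $ 1 = B $ 1 $ 1 \<and> A $ 1 $ 2 = B $ 1 $ 2 \<and> A $ 2 $ 1 = B $ 2 $ 1 \<and> A $ 2 $ 2 = B $ 2 $ 2"
  by (auto simp: vec_eq_iff forall_2)

definition fundF11 :: "int \<Rightarrow> real \<Rightarrow> complex \<Rightarrow> complex" where
  "fundF11 l \<mu> z = z powi (- l) * exp (of_real \<mu> * (1 / z - z))"

definition diagL11 :: "int \<Rightarrow> real \<Rightarrow> complex \<Rightarrow> complex" where
  "diagL11 l \<mu> z = (- (of_int l * z + of_real \<mu> * (1 + z^2))) / z^2"

definition sysL12 :: "real \<Rightarrow> complex \<Rightarrow> complex" where
  "sysL12 \<omega> z = 1 / (2 * \<i> * of_real \<omega> * z)"

lemma fundF_eq: "fundF l \<mu> z = mat2 (fundF11 l \<mu> z) 0 0 1"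
  by (simp add: fundF_def fundF11_def)

lemma diagL_eq: "diagL l \<mu> z = mat2 (diagL11 l \<mu> z) 0 0 0"
  by (simp add: diagL_def diagL11_def)

lemma sysL_eq: "sysL \<omega> l \<mu> z = mat2 (diagL11 l \<mu> z) (sysL12 \<omega> z) (sysL12 \<omega> z) 0"
  by (cases "z = 0") (simp_all add: sysL_def diagL11_def sysL12_def power2_eq_square field_simps)

lemma fundF11_nonzero: "z \<noteq> 0 \<Longrightarrow> fundF11 l \<mu> z \<noteq> 0"
  by (simp add: fundF11_def)

lemma fundF11_has_derivative:
  assumes "z \<noteq> 0"
  shows "(fundF11 l \<mu> has_field_derivative diagL11 l \<mu> z * fundF11 l \<mu> z) (at z)"
proof -
  have "(fundF11 l \<mu> has_field_derivative
     of_int (- l) * z powi (- l - 1) * exp (of_real \<mu> * (1 / z - z))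
     + z powi (- l) * (exp (of_real \<mu> * (1 / z - z)) * (of_real \<mu> * (- (1 / z^2) - 1)))) (at z)"
    unfolding fundF11_def using assms
    by (auto intro!: derivative_eq_intros simp: power2_eq_square field_simps)
  moreover have "z powi (- l - 1) = z powi (- l) / z"
    using assms by (simp add: power_int_diff)
  ultimately show ?thesis
    using assms
    by (elim DERIV_cong) (simp add: diagL11_def fundF11_def field_simps power2_eq_square)
qed

lemma inverse_fundF11_has_derivative:
  assumes "z \<noteq> 0"
  shows "((\<lambda>x. inverse (fundF11 l \<mu> x)) has_field_derivative
           - diagL11 l \<mu> z * inverse (fundF11 l \<mu> z)) (at z)"
  using DERIV_inverse_fun[OF fundF11_has_derivative[OF assms, of l \<mu>] fundF11_nonzero[OF assms]]
    fundF11_nonzero[OF assms, of l \<mu>]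
  by (elim DERIV_cong) (simp add: field_simps power2_eq_square)

lemma fundF11_of_real: "fundF11 l \<mu> (of_real y) = of_real (y powi (- l) * exp (\<mu> * (1 / y - y)))"
  by (simp add: fundF11_def flip: exp_of_real)

lemma fundF11_real: "z \<in> \<real> \<Longrightarrow> fundF11 l \<mu> z \<in> \<real>"
  by (metis Reals_cases Reals_of_real fundF11_of_real)

lemma norm_fundF11_of_real:
  "norm (fundF11 l \<mu> (of_real y)) = \<bar>y\<bar> powi (- l) * exp (\<mu> * (1 / y - y))"
  by (simp only: fundF11_of_real norm_of_real) (simp add: abs_mult power_int_abs)

lemma tendsto_fundF11_negative_axis:
  assumes "\<mu> > 0"
  shows "((\<lambda>x. fundF11 l \<mu> (of_real (- x))) \<longlongrightarrow> 0) (at_right 0)"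
proof (rule Lim_null_comparison)
  show "\<forall>\<^sub>F x in at_right 0.
      norm (fundF11 l \<mu> (of_real (- x))) \<le> x powr (of_int (- l)) * exp (- \<mu> * (1 / x - x))"
    using eventually_at_right_less[of 0]
    by eventually_elim
      (simp add: norm_fundF11_of_real powr_real_of_int' algebra_simps del: of_real_minus of_int_minus)
  show "((\<lambda>x::real. x powr (of_int (- l)) * exp (- \<mu> * (1 / x - x))) \<longlongrightarrow> 0) (at_right 0)"
    using assms by simp real_asymp
qed

lemma tendsto_inverse_fundF11_positive_axis:
  assumes "\<mu> > 0"
  shows "((\<lambda>x. inverse (fundF11 l \<mu> (of_real x))) \<longlongrightarrow> 0) (at_right 0)"
proof (rule Lim_null_comparison)
  show "\<forall>\<^sub>F x in at_right 0.
      norm (inverse (fundF11 l \<mu> (of_real x))) \<le> x powr (of_int l) * exp (- \<mu> * (1 / x - x))"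
    using eventually_at_right_less[of 0]
    by eventually_elim
      (simp add: norm_inverse norm_fundF11_of_real powr_real_of_int' power_int_minus exp_minus)
  show "((\<lambda>x::real. x powr (of_int l) * exp (- \<mu> * (1 / x - x))) \<longlongrightarrow> 0) (at_right 0)"
    using assms by real_asymp
qed

section \<open>The reflection symmetry\<close>

(* J conj(A) J with J = diag(1, -1) *)
definition reflect_mat :: "complex^2^2 \<Rightarrow> complex^2^2" where
  "reflect_mat A = mat2 (cnj (A $ 1 $ 1)) (- cnj (A $ 1 $ 2)) (- cnj (A $ 2 $ 1)) (cnj (A $ 2 $ 2))"

lemma reflect_mat_nth: "reflect_mat A $ i $ j = (if i = j then 1 else -1) * cnj (A $ i $ j)"
  using exhaust_2[of i] exhaust_2[of j] by (auto simp: reflect_mat_def)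

lemma reflect_mat_mult: "reflect_mat (A ** B) = reflect_mat A ** reflect_mat B"
  by (simp add: matrix_eq_2 reflect_mat_def matrix_mult_nth_2)

lemma reflect_mat_diff: "reflect_mat (A - B) = reflect_mat A - reflect_mat B"
  by (simp add: matrix_eq_2 reflect_mat_def)

lemma reflect_mat_mat1 [simp]: "reflect_mat (mat 1) = mat 1"
  by (simp add: matrix_eq_2 reflect_mat_def)

lemma reflect_mat_involutive [simp]: "reflect_mat (reflect_mat A) = A"
  by (simp add: matrix_eq_2 reflect_mat_def)

lemma invertible_reflect_mat: "invertible A \<Longrightarrow> invertible (reflect_mat A)"
  unfolding invertible_def by (metis reflect_mat_mult reflect_mat_mat1)

lemma continuous_on_reflect_mat:
  assumes "continuous_on S f"
  shows "continuous_on S (\<lambda>x. reflect_mat (f x))"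
proof -
  have "(\<lambda>x. reflect_mat (f x)) = (\<lambda>x. \<chi> i j. (if i = j then 1 else -1) * cnj (f x $ i $ j))"
    by (intro ext) (simp add: vec_eq_iff reflect_mat_nth)
  then show ?thesis
    using assms by (simp only:) (intro continuous_intros)
qed

lemma reflect_mat_sysL: "reflect_mat (sysL \<omega> l \<mu> (cnj z)) = sysL \<omega> l \<mu> z"
  by (simp add: sysL_eq reflect_mat_def diagL11_def sysL12_def)

lemma reflect_mat_diagL: "reflect_mat (diagL l \<mu> (cnj z)) = diagL l \<mu> z"
  by (simp add: diagL_eq reflect_mat_def diagL11_def)

lemma reflect_mat_fundF_of_real: "reflect_mat (fundF l \<mu> (of_real y)) = fundF l \<mu> (of_real y)"
  by (simp add: fundF_eq reflect_mat_def fundF11_of_real del: of_real_mult)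

lemma normalizing_reflect:
  assumes "normalizing \<omega> l \<mu> S H"
  shows "normalizing \<omega> l \<mu> (cnj ` S) (\<lambda>z. reflect_mat (H (cnj z)))"
proof -
  have deriv: "((\<lambda>x. reflect_mat (H (cnj x)) $ i $ j) has_field_derivative
      (sysL \<omega> l \<mu> z ** reflect_mat (H (cnj z)) - reflect_mat (H (cnj z)) ** diagL l \<mu> z) $ i $ j)
      (at z)"
    if "z \<in> cnj ` S" for z i j
  proof -
    have "((\<lambda>x. H x $ i $ j) has_field_derivative
        (sysL \<omega> l \<mu> (cnj z) ** H (cnj z) - H (cnj z) ** diagL l \<mu> (cnj z)) $ i $ j) (at (cnj z))"
      using assms that unfolding normalizing_def by auto
    from DERIV_cmult[OF has_field_derivative_cnj_cnj[OF this], of "if i = j then 1 else -1"]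
    have "((\<lambda>x. reflect_mat (H (cnj x)) $ i $ j) has_field_derivative reflect_mat
        (sysL \<omega> l \<mu> (cnj z) ** H (cnj z) - H (cnj z) ** diagL l \<mu> (cnj z)) $ i $ j) (at z)"
      unfolding reflect_mat_nth o_def .
    then show ?thesis
      unfolding reflect_mat_diff reflect_mat_mult reflect_mat_sysL reflect_mat_diagL .
  qed
  have "cnj ` closure S = closure (cnj ` S)"
    by (intro closure_injective_linear_image linear_cnj) (simp add: inj_on_def)
  moreover have "continuous_on (cnj ` closure S) (\<lambda>z. reflect_mat (H (cnj z)))"
  proof (rule continuous_on_reflect_mat, rule continuous_on_compose2[of "closure S" H])
    show "continuous_on (closure S) H"
      using assms by (simp add: normalizing_def)
  qed (auto intro: continuous_on_cnj continuous_on_id)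
  moreover have "(\<lambda>x. reflect_mat (H (cnj x)) $ i $ j) holomorphic_on cnj ` S" for i j
    using deriv unfolding holomorphic_on_def field_differentiable_def
    by (metis has_field_derivative_at_within)
  moreover have "invertible (reflect_mat (H (cnj z)))" if "z \<in> cnj ` S" for z
    using assms that unfolding normalizing_def by (auto intro: invertible_reflect_mat)
  moreover have "reflect_mat (H (cnj 0)) = mat 1"
    using assms unfolding normalizing_def by simp
  ultimately show ?thesis
    unfolding normalizing_def using deriv by simp
qed

section \<open>Uniqueness of normalizing transformations\<close>

definition column_solution ::
    "complex^2^2 \<Rightarrow> complex \<Rightarrow> (complex \<Rightarrow> complex) \<Rightarrow> (complex \<Rightarrow> complex) \<Rightarrow> complex \<Rightarrow> bool" where
  "column_solution A \<kappa> u v z \<longleftrightarrow>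
     (u has_field_derivative A $ 1 $ 1 * u z + A $ 1 $ 2 * v z - \<kappa> * u z) (at z) \<and>
     (v has_field_derivative A $ 2 $ 1 * u z + A $ 2 $ 2 * v z - \<kappa> * v z) (at z)"

lemma wronskian_has_derivative:
  assumes "column_solution A \<kappa> u1 u2 z" and "column_solution A \<nu> v1 v2 z"
  shows "((\<lambda>x. u1 x * v2 x - u2 x * v1 x) has_field_derivative
           (A $ 1 $ 1 + A $ 2 $ 2 - \<kappa> - \<nu>) * (u1 z * v2 z - u2 z * v1 z)) (at z)"
proof -
  from assms have
      u1: "(u1 has_field_derivative A $ 1 $ 1 * u1 z + A $ 1 $ 2 * u2 z - \<kappa> * u1 z) (at z)" and
      u2: "(u2 has_field_derivative A $ 2 $ 1 * u1 z + A $ 2 $ 2 * u2 z - \<kappa> * u2 z) (at z)" and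
      v1: "(v1 has_field_derivative A $ 1 $ 1 * v1 z + A $ 1 $ 2 * v2 z - \<nu> * v1 z) (at z)" and
      v2: "(v2 has_field_derivative A $ 2 $ 1 * v1 z + A $ 2 $ 2 * v2 z - \<nu> * v2 z) (at z)"
    unfolding column_solution_def by blast+
  show ?thesis
    by (rule DERIV_cong[OF DERIV_diff[OF DERIV_mult[OF u1 v2] DERIV_mult[OF u2 v1]]])
      (simp add: algebra_simps)
qed

lemma normalizing_column_solutions:
  assumes "normalizing \<omega> l \<mu> S H" and "z \<in> S"
  shows "column_solution (sysL \<omega> l \<mu> z) (diagL11 l \<mu> z) (\<lambda>x. H x $ 1 $ 1) (\<lambda>x. H x $ 2 $ 1) z"
    and "column_solution (sysL \<omega> l \<mu> z) 0 (\<lambda>x. H x $ 1 $ 2) (\<lambda>x. H x $ 2 $ 2) z"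
proof -
  have D: "((\<lambda>x. H x $ i $ j) has_field_derivative
      (sysL \<omega> l \<mu> z ** H z - H z ** diagL l \<mu> z) $ i $ j) (at z)" for i j
    using assms unfolding normalizing_def by blast
  show "column_solution (sysL \<omega> l \<mu> z) (diagL11 l \<mu> z) (\<lambda>x. H x $ 1 $ 1) (\<lambda>x. H x $ 2 $ 1) z"
    "column_solution (sysL \<omega> l \<mu> z) 0 (\<lambda>x. H x $ 1 $ 2) (\<lambda>x. H x $ 2 $ 2) z"
    unfolding column_solution_def
    by (intro conjI DERIV_cong[OF D]; simp add: matrix_mult_nth_2 sysL_eq diagL_eq algebra_simps)+
qed

lemma normalizing_tendsto_ray:
  assumes "normalizing \<omega> l \<mu> S H" and "\<sigma> \<noteq> 0" and "\<And>x. x > 0 \<Longrightarrow> of_real (\<sigma> * x) \<in> S"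
  shows "((\<lambda>x. H (of_real (\<sigma> * x))) \<longlongrightarrow> mat 1) (at_right 0)"
proof -
  have ray: "((\<lambda>x. of_real (\<sigma> * x) :: complex) \<longlongrightarrow> 0) (at_right 0)"
    by (auto intro!: tendsto_eq_intros)
  have in_S: "\<forall>\<^sub>F x in at_right 0. of_real (\<sigma> * x) \<in> closure S"
    using eventually_at_right_less[of 0] by eventually_elim (use assms(3) closure_subset in auto)
  then have "0 \<in> closure S"
    by (intro Lim_in_closed_set[OF closed_closure _ _ ray]) auto
  moreover have "continuous_on (closure S) H" and "H 0 = mat 1"
    using assms(1) unfolding normalizing_def by blast+
  ultimately show ?thesis
    using continuous_within_tendsto_compose[OF _ in_S ray]
    by (metis continuous_on_eq_continuous_within)
qed

lemma segment_to_minus_i_in_lower_half_plane: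
  assumes "w \<noteq> 0" and "Im w \<le> 0" and "y \<in> closed_segment w (- \<i>)"
  shows "y \<noteq> 0 \<and> Im y \<le> 0"
proof -
  obtain u where u: "0 \<le> u" "u \<le> 1" "y = (1 - u) *\<^sub>R w + u *\<^sub>R (- \<i>)"
    using assms(3) unfolding closed_segment_def by blast
  have "(1 - u) * Im w \<le> 0"
    using u assms(2) by (simp add: mult_nonneg_nonpos)
  moreover have "Im y = (1 - u) * Im w - u"
    using u(3) by simp
  ultimately have Im_neg: "u > 0 \<Longrightarrow> Im y < 0"
    by linarith
  show ?thesis
  proof (cases "u = 0")
    case True
    then show ?thesis
      using u(3) assms(1,2) by simp
  next
    case False
    with Im_neg u(1) have "Im y < 0"
      by simp
    then show ?thesis
      by auto
  qed
qed

lemma constant_on_lower_half_plane: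
  fixes F :: "complex \<Rightarrow> complex"
  assumes F': "\<And>w. w \<noteq> 0 \<Longrightarrow> Im w \<le> 0 \<Longrightarrow> (F has_field_derivative 0) (at w)"
    and lim: "((\<lambda>x. F (of_real (\<sigma> * x))) \<longlongrightarrow> c) (at_right 0)" and "\<sigma> \<noteq> 0"
    and "z \<noteq> 0" and "Im z \<le> 0"
  shows "F z = c"
proof -
  have F_eq: "F w = F (- \<i>)" if "w \<noteq> 0" "Im w \<le> 0" for w
  proof -
    obtain k where "\<forall>y \<in> closed_segment w (- \<i>). F y = k"
      using has_field_derivative_zero_constant[OF convex_closed_segment, of w "- \<i>" F]
        segment_to_minus_i_in_lower_half_plane[OF \<open>w \<noteq> 0\<close> \<open>Im w \<le> 0\<close>] F'
        has_field_derivative_at_within by blast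
    then show ?thesis
      by simp
  qed
  have "\<forall>\<^sub>F x in at_right 0. F (of_real (\<sigma> * x)) = F (- \<i>)"
    using eventually_at_right_less[of 0]
    by (rule eventually_mono) (intro F_eq; simp add: \<open>\<sigma> \<noteq> 0\<close>)
  then have "((\<lambda>x. F (of_real (\<sigma> * x))) \<longlongrightarrow> F (- \<i>)) (at_right 0)"
    by (rule tendsto_eventually)
  with lim have "c = F (- \<i>)"
    by (intro tendsto_unique[OF trivial_limit_at_right_real])
  with F_eq[OF \<open>z \<noteq> 0\<close> \<open>Im z \<le> 0\<close>] show ?thesis
    by simp
qed

lemma cramer_2:
  fixes a b c d x y :: "'a :: comm_ring_1"
  assumes "a * d - b * c = 1"
  shows "x = (x * d - y * c) * a + (a * y - b * x) * c"
    and "y = (x * d - y * c) * b + (a * y - b * x) * d"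
proof -
  have "x * (a * d - b * c) = (x * d - y * c) * a + (a * y - b * x) * c"
    "y * (a * d - b * c) = (x * d - y * c) * b + (a * y - b * x) * d"
    by (simp_all add: algebra_simps)
  with assms show "x = (x * d - y * c) * a + (a * y - b * x) * c"
    and "y = (x * d - y * c) * b + (a * y - b * x) * d"
    by simp_all
qed

(*
  A Wronskian of two columns whose diagonal entries of diagL are kappa and nu satisfies
  W' = (diagL11 - kappa - nu) W, so W times 1, fundF11 or inverse fundF11 is constant.
*)
context
  fixes \<omega> \<mu> :: real and l :: int and S :: "complex set" and H G :: "complex \<Rightarrow> complex^2^2"
  assumes \<mu>_pos: "\<mu> > 0"
    and H: "normalizing \<omega> l \<mu> S H" and G: "normalizing \<omega> l \<mu> S G"
    and lower: "\<And>w. w \<noteq> 0 \<Longrightarrow> Im w \<le> 0 \<Longrightarrow> w \<in> S"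
begin

lemma lower_half_plane_column_solutions:
  assumes "w \<noteq> 0" and "Im w \<le> 0"
  shows "column_solution (sysL \<omega> l \<mu> w) (diagL11 l \<mu> w) (\<lambda>x. H x $ 1 $ 1) (\<lambda>x. H x $ 2 $ 1) w"
    and "column_solution (sysL \<omega> l \<mu> w) 0 (\<lambda>x. H x $ 1 $ 2) (\<lambda>x. H x $ 2 $ 2) w"
    and "column_solution (sysL \<omega> l \<mu> w) (diagL11 l \<mu> w) (\<lambda>x. G x $ 1 $ 1) (\<lambda>x. G x $ 2 $ 1) w"
    and "column_solution (sysL \<omega> l \<mu> w) 0 (\<lambda>x. G x $ 1 $ 2) (\<lambda>x. G x $ 2 $ 2) w"
  using normalizing_column_solutions[OF H lower[OF assms]]
    normalizing_column_solutions[OF G lower[OF assms]]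
  by auto

lemma real_ray_entries_tendsto:
  assumes "\<sigma> \<noteq> 0"
  shows "((\<lambda>x. H (of_real (\<sigma> * x)) $ i $ j) \<longlongrightarrow> mat 1 $ i $ j) (at_right 0)"
    and "((\<lambda>x. G (of_real (\<sigma> * x)) $ i $ j) \<longlongrightarrow> mat 1 $ i $ j) (at_right 0)"
  using assms
  by (intro tendsto_vec_nth normalizing_tendsto_ray[OF H] normalizing_tendsto_ray[OF G] lower;
      simp)+

lemmas positive_ray_entries_tendsto = real_ray_entries_tendsto[OF one_neq_zero]
  and negative_ray_entries_tendsto = real_ray_entries_tendsto[OF neg_one_neq_zero]

lemma wronskian_col1_col2_eq_1:
  assumes "z \<noteq> 0" and "Im z \<le> 0"
  shows "G z $ 1 $ 1 * H z $ 2 $ 2 - G z $ 2 $ 1 * H z $ 1 $ 2 = 1"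
proof (rule constant_on_lower_half_plane[of _ 1, OF _ _ _ assms])
  show "((\<lambda>x. G x $ 1 $ 1 * H x $ 2 $ 2 - G x $ 2 $ 1 * H x $ 1 $ 2) has_field_derivative 0) (at w)"
    if "w \<noteq> 0" and "Im w \<le> 0" for w
    using wronskian_has_derivative[OF lower_half_plane_column_solutions(3,2)[OF that]]
    by (simp add: sysL_eq)
  show "((\<lambda>x. G (of_real (1 * x)) $ 1 $ 1 * H (of_real (1 * x)) $ 2 $ 2
      - G (of_real (1 * x)) $ 2 $ 1 * H (of_real (1 * x)) $ 1 $ 2) \<longlongrightarrow> 1) (at_right 0)"
    using tendsto_diff[OF tendsto_mult[OF positive_ray_entries_tendsto(2,1)]
        tendsto_mult[OF positive_ray_entries_tendsto(2,1)], of 1 1 2 2 2 1 1 2]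
    by simp
qed simp

lemma wronskian_col1_col1_eq_0:
  assumes "z \<noteq> 0" and "Im z \<le> 0"
  shows "H z $ 1 $ 1 * G z $ 2 $ 1 - H z $ 2 $ 1 * G z $ 1 $ 1 = 0"
proof -
  define W where "W x = H x $ 1 $ 1 * G x $ 2 $ 1 - H x $ 2 $ 1 * G x $ 1 $ 1" for x
  have "W z * fundF11 l \<mu> z = 0"
  proof (rule constant_on_lower_half_plane[of _ "-1", OF _ _ _ assms])
    show "((\<lambda>x. W x * fundF11 l \<mu> x) has_field_derivative 0) (at w)" if "w \<noteq> 0" and "Im w \<le> 0" for w
      using DERIV_mult[OF
          wronskian_has_derivative[OF lower_half_plane_column_solutions(1,3)[OF that]]
          fundF11_has_derivative[OF \<open>w \<noteq> 0\<close>, of l \<mu>]]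
      unfolding W_def by (elim DERIV_cong) (simp add: sysL_eq algebra_simps)
    have "((\<lambda>x. W (of_real (-1 * x))) \<longlongrightarrow> 0) (at_right 0)"
      unfolding W_def
      using tendsto_diff[OF tendsto_mult[OF negative_ray_entries_tendsto(1,2)]
          tendsto_mult[OF negative_ray_entries_tendsto(1,2)], of 1 1 2 1 2 1 1 1]
      by simp
    from tendsto_mult[OF this tendsto_fundF11_negative_axis[OF \<mu>_pos]]
    show "((\<lambda>x. W (of_real (-1 * x)) * fundF11 l \<mu> (of_real (-1 * x))) \<longlongrightarrow> 0) (at_right 0)"
      by simp
  qed simp
  then show ?thesis
    using fundF11_nonzero[OF assms(1)] by (simp add: W_def)
qed

lemma wronskian_col2_col2_eq_0:
  assumes "z \<noteq> 0" and "Im z \<le> 0"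
  shows "G z $ 1 $ 2 * H z $ 2 $ 2 - G z $ 2 $ 2 * H z $ 1 $ 2 = 0"
proof -
  define W where "W x = G x $ 1 $ 2 * H x $ 2 $ 2 - G x $ 2 $ 2 * H x $ 1 $ 2" for x
  have "W z * inverse (fundF11 l \<mu> z) = 0"
  proof (rule constant_on_lower_half_plane[of _ 1, OF _ _ _ assms])
    show "((\<lambda>x. W x * inverse (fundF11 l \<mu> x)) has_field_derivative 0) (at w)"
      if "w \<noteq> 0" and "Im w \<le> 0" for w
      using DERIV_mult[OF
          wronskian_has_derivative[OF lower_half_plane_column_solutions(4,2)[OF that]]
          inverse_fundF11_has_derivative[OF \<open>w \<noteq> 0\<close>, of l \<mu>]]
      unfolding W_def by (elim DERIV_cong) (simp add: sysL_eq algebra_simps)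
    have "((\<lambda>x. W (of_real (1 * x))) \<longlongrightarrow> 0) (at_right 0)"
      unfolding W_def
      using tendsto_diff[OF tendsto_mult[OF positive_ray_entries_tendsto(2,1)]
          tendsto_mult[OF positive_ray_entries_tendsto(2,1)], of 1 2 2 2 2 2 1 2]
      by simp
    from tendsto_mult[OF this tendsto_inverse_fundF11_positive_axis[OF \<mu>_pos]]
    show "((\<lambda>x. W (of_real (1 * x)) * inverse (fundF11 l \<mu> (of_real (1 * x)))) \<longlongrightarrow> 0)
        (at_right 0)"
      by simp
  qed simp
  then show ?thesis
    using fundF11_nonzero[OF assms(1)] by (simp add: W_def)
qed

end

lemma normalizing_unique:
  assumes "\<mu> > 0" and "normalizing \<omega> l \<mu> S H" and "normalizing \<omega> l \<mu> S G"
    and "\<And>w. w \<noteq> 0 \<Longrightarrow> Im w \<le> 0 \<Longrightarrow> w \<in> S"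
    and "z \<noteq> 0" and "Im z \<le> 0"
  shows "G z = H z"
proof -
  have det: "H z $ 1 $ 1 * H z $ 2 $ 2 - H z $ 2 $ 1 * H z $ 1 $ 2 = 1"
    by (rule wronskian_col1_col2_eq_1[OF assms(1,2,2,4,5,6)])
  note HG = wronskian_col1_col2_eq_1[OF assms(1,2,3,4,5,6)]
    wronskian_col1_col1_eq_0[OF assms(1,2,3,4,5,6)]
    wronskian_col2_col2_eq_0[OF assms(1,2,3,4,5,6)]
    wronskian_col1_col2_eq_1[OF assms(1,3,2,4,5,6)]
  have "G z $ 1 $ 1 = H z $ 1 $ 1"
    using cramer_2(1)[where x = "G z $ 1 $ 1" and y = "G z $ 2 $ 1", OF det] HG(1,2) by simp
  moreover have "G z $ 2 $ 1 = H z $ 2 $ 1"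
    using cramer_2(2)[where x = "G z $ 1 $ 1" and y = "G z $ 2 $ 1", OF det] HG(1,2) by simp
  moreover have "G z $ 1 $ 2 = H z $ 1 $ 2"
    using cramer_2(1)[where x = "G z $ 1 $ 2" and y = "G z $ 2 $ 2", OF det] HG(3,4) by simp
  moreover have "G z $ 2 $ 2 = H z $ 2 $ 2"
    using cramer_2(2)[where x = "G z $ 1 $ 2" and y = "G z $ 2 $ 2", OF det] HG(3,4) by simp
  ultimately show ?thesis
    by (simp add: matrix_eq_2)
qed

section \<open>Stokes relations on the real axis\<close>

lemma tendsto_at_right_0_eq:
  fixes g h :: "real \<Rightarrow> 'a :: t2_space"
  assumes "\<And>x. x > 0 \<Longrightarrow> g x = h x" and "(g \<longlongrightarrow> A) (at_right 0)" and "(h \<longlongrightarrow> B) (at_right 0)"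
  shows "A = B"
proof -
  have "\<forall>\<^sub>F x in at_right 0. g x = h x"
    using eventually_at_right_less[of 0] by eventually_elim (rule assms(1))
  from tendsto_cong[THEN iffD1, OF this assms(2)] assms(3) show ?thesis
    using tendsto_unique trivial_limit_at_right_real by blast
qed

lemma exists_pos_nonzero_of_tendsto_1:
  fixes g :: "real \<Rightarrow> complex"
  assumes "(g \<longlongrightarrow> 1) (at_right 0)"
  obtains x where "x > 0" and "g x \<noteq> 0"
proof -
  have "\<forall>\<^sub>F x in at_right 0. x > 0 \<and> g x \<noteq> 0"
    using eventually_conj[OF eventually_at_right_less tendsto_imp_eventually_ne[OF assms, of 0]]
    by simp
  then show ?thesis
    using that eventually_happens' trivial_limit_at_right_real by blast
qed

lemma tendsto_mat1_entries_2:
  fixes P :: "'b \<Rightarrow> complex^2^2"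
  assumes "(P \<longlongrightarrow> mat 1) F"
  shows "((\<lambda>x. P x $ 1 $ 1) \<longlongrightarrow> 1) F" and "((\<lambda>x. P x $ 1 $ 2) \<longlongrightarrow> 0) F"
    and "((\<lambda>x. P x $ 2 $ 1) \<longlongrightarrow> 0) F" and "((\<lambda>x. P x $ 2 $ 2) \<longlongrightarrow> 1) F"
  using tendsto_vec_nth[OF tendsto_vec_nth[OF assms]] by (metis mat1_nth_2)+

lemma reflect_relation_entries:
  assumes "reflect_mat (P ** mat2 f 0 0 1) = P ** mat2 f 0 0 1 ** C" and "f \<in> \<real>"
  shows "cnj (P $ 1 $ 1) * f = P $ 1 $ 1 * f * C $ 1 $ 1 + P $ 1 $ 2 * C $ 2 $ 1"
    and "- cnj (P $ 2 $ 1) * f = P $ 2 $ 1 * f * C $ 1 $ 1 + P $ 2 $ 2 * C $ 2 $ 1"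
    and "- cnj (P $ 1 $ 2) = P $ 1 $ 1 * f * C $ 1 $ 2 + P $ 1 $ 2 * C $ 2 $ 2"
    and "cnj (P $ 2 $ 2) = P $ 2 $ 1 * f * C $ 1 $ 2 + P $ 2 $ 2 * C $ 2 $ 2"
  using assms by (auto simp: matrix_eq_2 reflect_mat_def matrix_mult_nth_2 Reals_cnj_iff)

lemma reflect_relation_swap: "W = reflect_mat W ** C \<Longrightarrow> reflect_mat W = W ** reflect_mat C"
  by (metis reflect_mat_involutive reflect_mat_mult)

context
  fixes P :: "real \<Rightarrow> complex^2^2" and f :: "real \<Rightarrow> complex" and C :: "complex^2^2"
  assumes P: "(P \<longlongrightarrow> mat 1) (at_right 0)"
    and f_real: "\<And>x. x > 0 \<Longrightarrow> f x \<in> \<real>" and f_nonzero: "\<And>x. x > 0 \<Longrightarrow> f x \<noteq> 0"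
    and relation: "\<And>x. x > 0 \<Longrightarrow> reflect_mat (P x ** mat2 (f x) 0 0 1) = P x ** mat2 (f x) 0 0 1 ** C"
begin

lemma reflect_relation_decay_unipotent:
  assumes f: "(f \<longlongrightarrow> 0) (at_right 0)"
  shows "C $ 1 $ 1 = 1" and "C $ 2 $ 1 = 0" and "C $ 2 $ 2 = 1"
proof -
  note lim = tendsto_mat1_entries_2[OF P] and E = reflect_relation_entries[OF relation f_real]
  show c: "C $ 2 $ 1 = 0"
  proof (rule tendsto_at_right_0_eq[symmetric])
    show "- (cnj (P x $ 2 $ 1) + P x $ 2 $ 1 * C $ 1 $ 1) * f x = P x $ 2 $ 2 * C $ 2 $ 1"
      if "x > 0" for x
      using E(2)[OF that that] by (simp add: algebra_simps)
    have "((\<lambda>x. - (cnj (P x $ 2 $ 1) + P x $ 2 $ 1 * C $ 1 $ 1) * f x) \<longlongrightarrow>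
        - (cnj 0 + 0 * C $ 1 $ 1) * 0) (at_right 0)"
      by (intro tendsto_intros lim f)
    then show "((\<lambda>x. - (cnj (P x $ 2 $ 1) + P x $ 2 $ 1 * C $ 1 $ 1) * f x) \<longlongrightarrow> 0) (at_right 0)"
      by simp
    show "((\<lambda>x. P x $ 2 $ 2 * C $ 2 $ 1) \<longlongrightarrow> C $ 2 $ 1) (at_right 0)"
      using tendsto_mult_right[OF lim(4)] by simp
  qed
  show "C $ 1 $ 1 = 1"
  proof (rule tendsto_at_right_0_eq[symmetric])
    show "cnj (P x $ 1 $ 1) = P x $ 1 $ 1 * C $ 1 $ 1" if "x > 0" for x
      using E(1)[OF that that] f_nonzero[OF that] c by simp
    show "((\<lambda>x. cnj (P x $ 1 $ 1)) \<longlongrightarrow> 1) (at_right 0)"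
      using tendsto_cnj[OF lim(1)] by simp
    show "((\<lambda>x. P x $ 1 $ 1 * C $ 1 $ 1) \<longlongrightarrow> C $ 1 $ 1) (at_right 0)"
      using tendsto_mult_right[OF lim(1)] by simp
  qed
  show "C $ 2 $ 2 = 1"
  proof (rule tendsto_at_right_0_eq[symmetric])
    show "cnj (P x $ 2 $ 2) = P x $ 2 $ 1 * f x * C $ 1 $ 2 + P x $ 2 $ 2 * C $ 2 $ 2"
      if "x > 0" for x
      using E(4)[OF that that] .
    show "((\<lambda>x. cnj (P x $ 2 $ 2)) \<longlongrightarrow> 1) (at_right 0)"
      using tendsto_cnj[OF lim(4)] by simp
    have "((\<lambda>x. P x $ 2 $ 1 * f x * C $ 1 $ 2 + P x $ 2 $ 2 * C $ 2 $ 2) \<longlongrightarrow>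
        0 * 0 * C $ 1 $ 2 + 1 * C $ 2 $ 2) (at_right 0)"
      by (intro tendsto_intros lim f)
    then show "((\<lambda>x. P x $ 2 $ 1 * f x * C $ 1 $ 2 + P x $ 2 $ 2 * C $ 2 $ 2) \<longlongrightarrow> C $ 2 $ 2)
        (at_right 0)"
      by simp
  qed
qed

lemma reflect_relation_decay_real:
  assumes "(f \<longlongrightarrow> 0) (at_right 0)"
  shows "C $ 1 $ 2 \<in> \<real>"
proof -
  note unipotent = reflect_relation_decay_unipotent[OF assms]
    and E = reflect_relation_entries[OF relation f_real]
  obtain x where "x > 0" and "P x $ 1 $ 1 \<noteq> 0"
    using exists_pos_nonzero_of_tendsto_1[OF tendsto_mat1_entries_2(1)[OF P]] .
  have "cnj (P x $ 1 $ 1) = P x $ 1 $ 1"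
    using E(1)[OF \<open>x > 0\<close> \<open>x > 0\<close>] f_nonzero[OF \<open>x > 0\<close>] unipotent(1,2) by simp
  moreover have "C $ 1 $ 2 = - (cnj (P x $ 1 $ 2) + P x $ 1 $ 2) / (P x $ 1 $ 1 * f x)"
    using E(3)[OF \<open>x > 0\<close> \<open>x > 0\<close>] unipotent(3) \<open>P x $ 1 $ 1 \<noteq> 0\<close> f_nonzero[OF \<open>x > 0\<close>]
    by (simp add: field_simps)
  ultimately show ?thesis
    using f_real[OF \<open>x > 0\<close>] by (simp add: Reals_cnj_iff add.commute)
qed

lemma reflect_relation_growth_unipotent:
  assumes f: "((\<lambda>x. inverse (f x)) \<longlongrightarrow> 0) (at_right 0)"
  shows "C $ 1 $ 1 = 1" and "C $ 1 $ 2 = 0" and "C $ 2 $ 2 = 1"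
proof -
  note lim = tendsto_mat1_entries_2[OF P] and E = reflect_relation_entries[OF relation f_real]
  show b: "C $ 1 $ 2 = 0"
  proof (rule tendsto_at_right_0_eq[symmetric])
    show "- (cnj (P x $ 1 $ 2) + P x $ 1 $ 2 * C $ 2 $ 2) * inverse (f x) = P x $ 1 $ 1 * C $ 1 $ 2"
      if "x > 0" for x
      using E(3)[OF that that] f_nonzero[OF that] by (simp add: field_simps)
    have "((\<lambda>x. - (cnj (P x $ 1 $ 2) + P x $ 1 $ 2 * C $ 2 $ 2) * inverse (f x)) \<longlongrightarrow>
        - (cnj 0 + 0 * C $ 2 $ 2) * 0) (at_right 0)"
      by (intro tendsto_intros lim f)
    then show "((\<lambda>x. - (cnj (P x $ 1 $ 2) + P x $ 1 $ 2 * C $ 2 $ 2) * inverse (f x)) \<longlongrightarrow> 0)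
        (at_right 0)"
      by simp
    show "((\<lambda>x. P x $ 1 $ 1 * C $ 1 $ 2) \<longlongrightarrow> C $ 1 $ 2) (at_right 0)"
      using tendsto_mult_right[OF lim(1)] by simp
  qed
  show "C $ 2 $ 2 = 1"
  proof (rule tendsto_at_right_0_eq[symmetric])
    show "cnj (P x $ 2 $ 2) = P x $ 2 $ 2 * C $ 2 $ 2" if "x > 0" for x
      using E(4)[OF that that] b by simp
    show "((\<lambda>x. cnj (P x $ 2 $ 2)) \<longlongrightarrow> 1) (at_right 0)"
      using tendsto_cnj[OF lim(4)] by simp
    show "((\<lambda>x. P x $ 2 $ 2 * C $ 2 $ 2) \<longlongrightarrow> C $ 2 $ 2) (at_right 0)"
      using tendsto_mult_right[OF lim(4)] by simp
  qed
  show "C $ 1 $ 1 = 1"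
  proof (rule tendsto_at_right_0_eq[symmetric])
    show "cnj (P x $ 1 $ 1) = P x $ 1 $ 1 * C $ 1 $ 1 + P x $ 1 $ 2 * C $ 2 $ 1 * inverse (f x)"
      if "x > 0" for x
      using E(1)[OF that that] f_nonzero[OF that] by (simp add: field_simps)
    show "((\<lambda>x. cnj (P x $ 1 $ 1)) \<longlongrightarrow> 1) (at_right 0)"
      using tendsto_cnj[OF lim(1)] by simp
    have "((\<lambda>x. P x $ 1 $ 1 * C $ 1 $ 1 + P x $ 1 $ 2 * C $ 2 $ 1 * inverse (f x)) \<longlongrightarrow>
        1 * C $ 1 $ 1 + 0 * C $ 2 $ 1 * 0) (at_right 0)"
      by (intro tendsto_intros lim f)
    then show "((\<lambda>x. P x $ 1 $ 1 * C $ 1 $ 1 + P x $ 1 $ 2 * C $ 2 $ 1 * inverse (f x)) \<longlongrightarrow> C $ 1 $ 1)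
        (at_right 0)"
      by simp
  qed
qed

lemma reflect_relation_growth_real:
  assumes "((\<lambda>x. inverse (f x)) \<longlongrightarrow> 0) (at_right 0)"
  shows "C $ 2 $ 1 \<in> \<real>"
proof -
  note unipotent = reflect_relation_growth_unipotent[OF assms]
    and E = reflect_relation_entries[OF relation f_real]
  obtain x where "x > 0" and "P x $ 2 $ 2 \<noteq> 0"
    using exists_pos_nonzero_of_tendsto_1[OF tendsto_mat1_entries_2(4)[OF P]] .
  have "cnj (P x $ 2 $ 2) = P x $ 2 $ 2"
    using E(4)[OF \<open>x > 0\<close> \<open>x > 0\<close>] unipotent(2,3) by simp
  moreover have "- (cnj (P x $ 2 $ 1) + P x $ 2 $ 1 * C $ 1 $ 1) * f x = P x $ 2 $ 2 * C $ 2 $ 1"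
    using E(2)[OF \<open>x > 0\<close> \<open>x > 0\<close>] by (simp add: algebra_simps)
  then have "C $ 2 $ 1 = - (cnj (P x $ 2 $ 1) + P x $ 2 $ 1) * f x / P x $ 2 $ 2"
    using unipotent(1) \<open>P x $ 2 $ 2 \<noteq> 0\<close> by (simp add: field_simps)
  ultimately show ?thesis
    using f_real[OF \<open>x > 0\<close>] by (simp add: Reals_cnj_iff add.commute)
qed

end

section \<open>Sectors\<close>

lemma mem_sectorP:
  assumes "0 < \<alpha>" and "z \<noteq> 0" and "Im z \<ge> 0"
  shows "z \<in> sectorP \<alpha>"
proof -
  have "0 \<le> Arg z" and "Arg z \<le> pi"
    using assms Arg_less_0 Arg_le_pi by (auto simp: not_less)
  moreover have "z = of_real (norm z) * cis (Arg z)"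
    using Arg_eq[OF assms(2)] by (simp add: cis_conv_exp)
  ultimately show ?thesis
    unfolding sectorP_def using assms by (intro CollectI exI[of _ "norm z"] exI[of _ "Arg z"]) auto
qed

lemma mem_sectorM:
  assumes "0 < \<alpha>" and "z \<noteq> 0" and "Im z \<le> 0"
  shows "z \<in> sectorM \<alpha>"
proof -
  have "cnj z \<in> sectorP \<alpha>"
    using assms by (intro mem_sectorP) auto
  then show ?thesis
    unfolding sectorM_def by (metis complex_cnj_cnj image_eqI)
qed

lemma real_half_axis_subset_Sigma:
  assumes "0 < \<alpha>" and "c \<in> {-1, 1}" and "0 < x * c"
  shows "complex_of_real x \<in> connected_component_set (sectorP \<alpha> \<inter> sectorM \<alpha>) c"
proof -
  have "(\<lambda>t. complex_of_real (c * t)) ` {0<..} \<subseteq> connected_component_set (sectorP \<alpha> \<inter> sectorM \<alpha>) c"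
  proof (rule connected_component_maximal)
    show "c \<in> (\<lambda>t. complex_of_real (c * t)) ` {0<..}"
      using assms(2) by (intro image_eqI[of _ _ 1]) auto
    show "connected ((\<lambda>t. complex_of_real (c * t)) ` {0<..})"
      by (intro connected_continuous_image continuous_intros) auto
    show "(\<lambda>t. complex_of_real (c * t)) ` {0<..} \<subseteq> sectorP \<alpha> \<inter> sectorM \<alpha>"
      using assms(1,2) by (auto intro!: mem_sectorP mem_sectorM)
  qed
  moreover have "x = c * (x * c)"
    using assms(2) by auto
  ultimately show ?thesis
    using assms(3) by (metis greaterThan_iff image_eqI subsetD)
qed

lemma negative_real_mem_Sigma0: "0 < \<alpha> \<Longrightarrow> x < 0 \<Longrightarrow> complex_of_real x \<in> Sigma0 \<alpha>"
  unfolding Sigma0_def using real_half_axis_subset_Sigma[of \<alpha> "-1" x] by simp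

lemma positive_real_mem_Sigma1: "0 < \<alpha> \<Longrightarrow> x > 0 \<Longrightarrow> complex_of_real x \<in> Sigma1 \<alpha>"
  unfolding Sigma1_def using real_half_axis_subset_Sigma[of \<alpha> 1 x] by simp

lemma normalizing_minus_eq_reflect:
  assumes "\<mu> > 0" and "0 < \<alpha>"
    and "normalizing \<omega> l \<mu> (sectorP \<alpha>) Hp" and "normalizing \<omega> l \<mu> (sectorM \<alpha>) Hm"
    and "z \<noteq> 0" and "Im z \<le> 0"
  shows "Hm z = reflect_mat (Hp (cnj z))"
proof -
  have "normalizing \<omega> l \<mu> (sectorM \<alpha>) (\<lambda>z. reflect_mat (Hp (cnj z)))"
    using normalizing_reflect[OF assms(3)] by (simp add: sectorM_def)
  from normalizing_unique[OF assms(1,4) this mem_sectorM[OF assms(2)] assms(5,6)] show ?thesis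
    by simp
qed

theorem mainTheorem3:
  fixes \<omega> \<mu> \<alpha> :: real and l :: int
    and Hp Hm :: "complex \<Rightarrow> complex^2^2" and C0 C1 :: "complex^2^2"
  assumes "\<omega> > 0" and "\<mu> > 0"
    and "0 < \<alpha>" and "\<alpha> < pi / 2"
    and "normalizing \<omega> l \<mu> (sectorP \<alpha>) Hp"
    and "normalizing \<omega> l \<mu> (sectorM \<alpha>) Hm"
    and "\<forall>z\<in>Sigma0 \<alpha>. Hm z ** fundF l \<mu> z = (Hp z ** fundF l \<mu> z) ** C0"
    and "\<forall>z\<in>Sigma1 \<alpha>. Hp z ** fundF l \<mu> z = (Hm z ** fundF l \<mu> z) ** C1"
  shows "C0 $ 1 $ 2 \<in> \<real> \<and> C1 $ 2 $ 1 \<in> \<real>"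
proof -
  have stokes_axis:
    "reflect_mat (Hp (of_real y) ** fundF l \<mu> (of_real y)) = Hm (of_real y) ** fundF l \<mu> (of_real y)"
    if "y \<noteq> 0" for y
    using normalizing_minus_eq_reflect[OF assms(2,3,5,6), of "of_real y"] that
    by (simp add: reflect_mat_mult reflect_mat_fundF_of_real)
  have ray: "((\<lambda>x. Hp (of_real (\<sigma> * x))) \<longlongrightarrow> mat 1) (at_right 0)" if "\<sigma> \<noteq> 0" for \<sigma>
    using that assms(3) by (intro normalizing_tendsto_ray[OF assms(5)] mem_sectorP) auto
  have "C0 $ 1 $ 2 \<in> \<real>"
  proof (rule reflect_relation_decay_real[where P = "\<lambda>x. Hp (of_real (-1 * x))"])
    show "reflect_mat (Hp (of_real (-1 * x)) ** mat2 (fundF11 l \<mu> (of_real (- x))) 0 0 1) =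
        Hp (of_real (-1 * x)) ** mat2 (fundF11 l \<mu> (of_real (- x))) 0 0 1 ** C0" if "x > 0" for x
      using stokes_axis[of "- x"] assms(7) negative_real_mem_Sigma0[OF assms(3), of "- x"] that
      by (simp add: fundF_eq)
  qed (use ray[of "-1"] tendsto_fundF11_negative_axis[OF assms(2)] in
      \<open>simp_all add: fundF11_real fundF11_nonzero\<close>)
  moreover have "reflect_mat C1 $ 2 $ 1 \<in> \<real>"
  proof (rule reflect_relation_growth_real[where P = "\<lambda>x. Hp (of_real (1 * x))"])
    show "reflect_mat (Hp (of_real (1 * x)) ** mat2 (fundF11 l \<mu> (of_real x)) 0 0 1) =
        Hp (of_real (1 * x)) ** mat2 (fundF11 l \<mu> (of_real x)) 0 0 1 ** reflect_mat C1"
      if "x > 0" for x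
      using that reflect_relation_swap stokes_axis[of x] assms(8)
        positive_real_mem_Sigma1[OF assms(3), of x]
      by (simp add: fundF_eq)
  qed (use ray[of 1] tendsto_inverse_fundF11_positive_axis[OF assms(2)] in
      \<open>simp_all add: fundF11_real fundF11_nonzero\<close>)
  ultimately show ?thesis
    by (simp add: reflect_mat_nth Reals_cnj_iff)
qed

end
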